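(* For $n\ge5$ and $k\ge4$, \[a^\circ_{n,k}(1342)=a^\circ_{n-1,k}(1342)+b^\circ_{n,k}(1342)+\sum_{r=3}^{n-1}b^\circ_{r,k-1}(1342),\] where $a^\circ_{m,j}(1342)$ is the number of cyclic permutations $\pi\in\mathfrak S_m$ whose one-line notation avoids $\delta_j=j(j-1)\cdots21$ and such that every cyclic rotation of $C(\pi)$ avoids $1342$, and $b^\circ_{m,j}(1342)$ is the number of those with additionally $\pi_1=m$.
   Context: A permutation $\pi\in\mathfrak S_n$ is cyclic if it consists of a single $n$-cycle. For cyclic $\pi$, $C(\pi)=(1,c_2,\dots,c_n)$ with $c_2=\pi(1)$, $c_{i+1}=\pi(c_i)$; its cyclic rotations are the sequences $c_ic_{i+1}\cdots c_nc_1\cdots c_{i-1}$ (with $c_1=1$). A sequence avoids a pattern $\sigma\in\mathfrak S_m$ if no subsequence of length $m$ is in the same relative order as $\sigma$. The one-line notation of $\pi$ is $\pi_1\cdots\pi_n$, $\pi_i=\pi(i)$. *)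

theory Defs
  imports "HOL-Combinatorics.Permutations"
begin

text \<open>Permutations of {1..n} are functions nat => nat with pi permutes {1..n}.\<close>

definition one_line :: "nat \<Rightarrow> (nat \<Rightarrow> nat) \<Rightarrow> nat list" where
  "one_line n \<pi> = map \<pi> [1..<n+1]"

definition cyclic_perm :: "nat \<Rightarrow> (nat \<Rightarrow> nat) \<Rightarrow> bool" where
  "cyclic_perm n \<pi> \<longleftrightarrow> \<pi> permutes {1..n} \<and> {(\<pi> ^^ k) 1 | k. True} = {1..n}"

definition cycle_form :: "nat \<Rightarrow> (nat \<Rightarrow> nat) \<Rightarrow> nat list" where
  "cycle_form n \<pi> = map (\<lambda>i. (\<pi> ^^ i) 1) [0..<n]"

definition cyclic_rotations :: "nat \<Rightarrow> (nat \<Rightarrow> nat) \<Rightarrow> nat list set" where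
  "cyclic_rotations n \<pi> = {rotate i (cycle_form n \<pi>) | i. i < n}"

definition contains_pattern :: "nat list \<Rightarrow> nat list \<Rightarrow> bool" where
  "contains_pattern xs \<sigma> \<longleftrightarrow>
     (\<exists>idx. length idx = length \<sigma> \<and> sorted_wrt (<) idx \<and> (\<forall>i\<in>set idx. i < length xs) \<and>
        (\<forall>i<length \<sigma>. \<forall>j<length \<sigma>. xs ! (idx ! i) < xs ! (idx ! j) \<longleftrightarrow> \<sigma> ! i < \<sigma> ! j))"

definition avoids :: "nat list \<Rightarrow> nat list \<Rightarrow> bool" where
  "avoids xs \<sigma> \<longleftrightarrow> \<not> contains_pattern xs \<sigma>"

definition delta :: "nat \<Rightarrow> nat list" where
  "delta j = rev [1..<j+1]"

definition cyc_avoiders :: "nat \<Rightarrow> nat \<Rightarrow> (nat \<Rightarrow> nat) set" where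
  "cyc_avoiders m j = {\<pi>. cyclic_perm m \<pi> \<and> avoids (one_line m \<pi>) (delta j) \<and>
       (\<forall>w\<in>cyclic_rotations m \<pi>. avoids w [1,3,4,2])}"

definition a_circ_1342 :: "nat \<Rightarrow> nat \<Rightarrow> nat" where
  "a_circ_1342 m j = card (cyc_avoiders m j)"

definition b_circ_1342 :: "nat \<Rightarrow> nat \<Rightarrow> nat" where
  "b_circ_1342 m j = card {\<pi> \<in> cyc_avoiders m j. \<pi> 1 = m}"

end

theory Submission
  imports Defs "HOL-Combinatorics.Cycles"
begin

(* A cyclic permutation is determined by its cycle word c = C(pi), a list of 1..n starting
   with 1, and the rotation condition says that c contains no cyclic occurrence of 1342.
   Classify the words by their second letter c_2 = pi(1), which lies in {2..n}.
   If c_2 = 2, deleting the 1 and lowering every other letter by one is a bijection onto the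
   words of length n - 1; in one-line notation this only removes a leading 2, which cannot
   start a decreasing subsequence of length k >= 3.
   If c_2 = n, the word is counted by b_{n,k}.
   If c_2 = r with 3 <= r < n, avoiding cyclic 1342 forces c = s n (n-1) ... (r+1) with s a
   word of length r and second letter r. In one-line notation the entry 1 of the permutation
   of s becomes n and 1, r+1, ..., n-1 is appended; as that permutation starts with its
   maximum r and has its 2 after its 1, this raises the longest decreasing subsequence by
   exactly one, so delta_k is avoided by c iff delta_(k-1) is avoided by s. *)

section \<open>Cycle words\<close>

text \<open>A cyclic permutation \<open>\<pi>\<close> of \<open>{1..n}\<close> is encoded by its cycle word
  \<open>C(\<pi>)\<close>; \<open>cycle_of_list\<close> (from \<open>HOL-Combinatorics.Cycles\<close>) decodes it.\<close>

definition cycle_words :: "nat \<Rightarrow> nat list set" where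
  "cycle_words n = {c. distinct c \<and> set c = {1..n} \<and> length c = n \<and> c ! 0 = 1}"

lemma cycle_of_list_nth:
  assumes "distinct c" "i < length c"
  shows "cycle_of_list c (c ! i) = c ! (Suc i mod length c)"
proof -
  have "map (cycle_of_list c) c = rotate1 c"
    using cyclic_rotation[OF assms(1), of 1] by simp
  then show ?thesis
    using assms(2) nth_rotate1[OF assms(2)] by (metis nth_map)
qed

lemma funpow_cycle_of_list_hd:
  assumes "distinct c" "c \<noteq> []"
  shows "(cycle_of_list c ^^ i) (c ! 0) = c ! (i mod length c)"
  using arg_cong[OF cyclic_rotation[OF assms(1), of i], of "\<lambda>xs. xs ! 0"] assms(2)
  by (simp add: nth_rotate)

lemma cycle_form_cycle_of_list:
  assumes "c \<in> cycle_words n"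
  shows "cycle_form n (cycle_of_list c) = c"
proof (rule nth_equalityI)
  fix i assume "i < length (cycle_form n (cycle_of_list c))"
  then have "i < length c" "c \<noteq> []"
    using assms by (auto simp: cycle_form_def cycle_words_def)
  then show "cycle_form n (cycle_of_list c) ! i = c ! i"
    using assms funpow_cycle_of_list_hd[of c i] by (simp add: cycle_form_def cycle_words_def)
qed (use assms in \<open>simp add: cycle_form_def cycle_words_def\<close>)

lemma cyclic_perm_cycle_of_list:
  assumes "c \<in> cycle_words n" "0 < n"
  shows "cyclic_perm n (cycle_of_list c)"
proof -
  have c: "distinct c" "set c = {1..n}" "length c = n" "c ! 0 = 1"
    using assms(1) by (auto simp: cycle_words_def)
  have "{(cycle_of_list c ^^ k) 1 | k. True} = {c ! (k mod n) | k. True}"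
    using funpow_cycle_of_list_hd[of c] c assms(2) by auto
  also have "\<dots> = set c"
  proof
    show "{c ! (k mod n) | k. True} \<subseteq> set c"
      using c assms(2) by auto
    show "set c \<subseteq> {c ! (k mod n) | k. True}"
    proof
      fix x assume "x \<in> set c"
      then obtain i where "i < n" "x = c ! i"
        using c(3) by (metis in_set_conv_nth)
      then show "x \<in> {c ! (k mod n) | k. True}"
        by (intro CollectI exI[of _ i]) simp
    qed
  qed
  finally show ?thesis
    using cycle_permutes[of c] c by (simp add: cyclic_perm_def)
qed

lemma cycle_form_eq_support:
  assumes "cyclic_perm n \<pi>"
  shows "cycle_form n \<pi> = support \<pi> 1" and "permutation \<pi>"
proof -
  have perm: "\<pi> permutes {1..n}" and orbit: "range (\<lambda>k. (\<pi> ^^ k) 1) = {1..n}"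
    using assms by (auto simp: cyclic_perm_def full_SetCompr_eq)
  show p: "permutation \<pi>"
    using permutes_imp_permutation[OF _ perm] by simp
  have "card (set (support \<pi> 1)) = n"
    using support_set[OF p, of 1] orbit by simp
  then have "least_power \<pi> 1 = n"
    using distinct_card[OF cycle_of_permutation[OF p, of 1]] by simp
  then show "cycle_form n \<pi> = support \<pi> 1"
    by (simp add: cycle_form_def)
qed

lemma cycle_form_of_cyclic_perm:
  assumes "cyclic_perm n \<pi>"
  shows "cycle_form n \<pi> \<in> cycle_words n" and "cycle_of_list (cycle_form n \<pi>) = \<pi>"
proof -
  note support = cycle_form_eq_support[OF assms]
  have perm: "\<pi> permutes {1..n}" and orbit: "range (\<lambda>k. (\<pi> ^^ k) 1) = {1..n}"
    using assms by (auto simp: cyclic_perm_def full_SetCompr_eq)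
  have set_c: "set (cycle_form n \<pi>) = {1..n}"
    using support_set[OF support(2)] orbit support(1) by simp
  have "(\<pi> ^^ 0) 1 \<in> {1..n}"
    using orbit by blast
  then have "0 < n"
    by simp
  moreover have "distinct (cycle_form n \<pi>)"
    using cycle_of_permutation[OF support(2)] support(1) by simp
  ultimately show "cycle_form n \<pi> \<in> cycle_words n"
    using set_c by (simp add: cycle_words_def cycle_form_def)
  show "cycle_of_list (cycle_form n \<pi>) = \<pi>"
  proof
    fix x
    show "cycle_of_list (cycle_form n \<pi>) x = \<pi> x"
      using cycle_restrict[OF support(2), of x 1] id_outside_supp[of x] permutes_not_in[OF perm]
        set_c support(1) by (cases "x \<in> {1..n}") auto
  qed
qed

lemma bij_betw_cycle_of_list:
  assumes "0 < n"
  shows "bij_betw cycle_of_list (cycle_words n) {\<pi>. cyclic_perm n \<pi>}"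
  by (rule bij_betw_byWitness[where f' = "cycle_form n"])
    (use assms cycle_form_cycle_of_list cyclic_perm_cycle_of_list cycle_form_of_cyclic_perm in auto)

lemma cycle_words_nth_mem:
  "c \<in> cycle_words n \<Longrightarrow> i < n \<Longrightarrow> c ! i \<in> {1..n}"
  by (auto simp: cycle_words_def dest: nth_mem)

lemma cycle_words_nth_eq_iff:
  "c \<in> cycle_words n \<Longrightarrow> i < n \<Longrightarrow> j < n \<Longrightarrow> c ! i = c ! j \<longleftrightarrow> i = j"
  by (auto simp: cycle_words_def nth_eq_iff_index_eq)

lemma cycle_words_nth_eq_one_iff:
  "c \<in> cycle_words n \<Longrightarrow> i < n \<Longrightarrow> c ! i = 1 \<longleftrightarrow> i = 0"
  using cycle_words_nth_eq_iff[of c n i 0] by (auto simp: cycle_words_def)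

lemma cycle_words_last:
  assumes "c \<in> cycle_words n" "0 < n"
  shows "last c = c ! (n - 1)" "last c \<in> {1..n}"
proof -
  have "c \<noteq> []" "length c = n" "set c = {1..n}"
    using assms by (auto simp: cycle_words_def)
  then show "last c = c ! (n - 1)" "last c \<in> {1..n}"
    using last_in_set[of c] by (simp_all add: last_conv_nth)
qed

lemma cycle_of_list_one:
  assumes "c \<in> cycle_words n" "1 < n"
  shows "cycle_of_list c 1 = c ! 1"
proof -
  have c: "distinct c" "length c = n" "c ! 0 = 1"
    using assms(1) by (auto simp: cycle_words_def)
  then show ?thesis
    using cycle_of_list_nth[OF c(1), of 0] assms(2) by simp
qed

lemma cycle_of_list_map:
  assumes "distinct cs" "inj f" "x \<in> set cs"
  shows "cycle_of_list (map f cs) (f x) = f (cycle_of_list cs x)"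
proof -
  obtain i where i: "i < length cs" "x = cs ! i"
    using assms(3) by (metis in_set_conv_nth)
  have "distinct (map f cs)"
    using assms(1) inj_on_subset[OF assms(2) subset_UNIV] by (simp add: distinct_map)
  then have "cycle_of_list (map f cs) (map f cs ! i) = map f cs ! (Suc i mod length cs)"
    using cycle_of_list_nth[of "map f cs" i] i by simp
  moreover have "Suc i mod length cs < length cs"
    by (rule mod_less_divisor) (use i(1) in linarith)
  ultimately show ?thesis
    using cycle_of_list_nth[OF assms(1) i(1)] i by simp
qed

lemma one_line_nth: "i < n \<Longrightarrow> one_line n \<pi> ! i = \<pi> (Suc i)"
  by (simp add: one_line_def del: upt_Suc)

lemma one_line_nth_pred: "x \<in> {1..n} \<Longrightarrow> one_line n \<pi> ! (x - 1) = \<pi> x"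
  by (cases x) (auto simp: one_line_nth)

lemma length_one_line [simp]: "length (one_line n \<pi>) = n"
  by (simp add: one_line_def)

lemma set_one_line:
  assumes "\<pi> permutes {1..n}"
  shows "set (one_line n \<pi>) = {1..n}"
  by (simp only: one_line_def set_map set_upt Suc_eq_plus1[symmetric]
      atLeastLessThanSuc_atLeastAtMost permutes_image[OF assms])

lemma distinct_one_line:
  assumes "\<pi> permutes {1..n}"
  shows "distinct (one_line n \<pi>)"
  using inj_on_subset[OF permutes_inj[OF assms] subset_UNIV]
  by (simp add: one_line_def distinct_map del: upt_Suc)

section \<open>Occurrences of 1342 and of decreasing subsequences\<close>

definition occurs_1342 :: "nat list \<Rightarrow> bool" where
  "occurs_1342 xs \<longleftrightarrow> (\<exists>i j l m. i < j \<and> j < l \<and> l < m \<and> m < length xs \<and>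
      xs ! i < xs ! m \<and> xs ! m < xs ! j \<and> xs ! j < xs ! l)"

lemma contains_pattern_1342_iff: "contains_pattern xs [1,3,4,2] \<longleftrightarrow> occurs_1342 xs"
proof
  assume "contains_pattern xs [1,3,4,2]"
  then obtain idx where len: "length idx = length [1,3,4,2::nat]" and sorted: "sorted_wrt (<) idx"
    and bound: "\<forall>i\<in>set idx. i < length xs"
    and order: "\<forall>a<length [1,3,4,2::nat]. \<forall>b<length [1,3,4,2::nat].
      xs ! (idx ! a) < xs ! (idx ! b) \<longleftrightarrow> [1,3,4,2::nat] ! a < [1,3,4,2] ! b"
    unfolding contains_pattern_def by blast
  obtain i j l m where idx: "idx = [i,j,l,m]"
    using len by (auto simp: numeral_eq_Suc length_Suc_conv)
  have "xs ! i < xs ! m" "xs ! m < xs ! j" "xs ! j < xs ! l"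
    using order[rule_format, of 0 3] order[rule_format, of 3 1] order[rule_format, of 1 2]
    by (simp_all add: idx numeral_eq_Suc)
  then show "occurs_1342 xs"
    using sorted bound unfolding occurs_1342_def idx by auto
next
  assume "occurs_1342 xs"
  then obtain i j l m where pos: "i < j" "j < l" "l < m" "m < length xs"
      and val: "xs ! i < xs ! m" "xs ! m < xs ! j" "xs ! j < xs ! l"
    unfolding occurs_1342_def by blast
  have "\<forall>a<Suc (Suc (Suc (Suc 0))). \<forall>b<Suc (Suc (Suc (Suc 0))).
      xs ! ([i,j,l,m] ! a) < xs ! ([i,j,l,m] ! b) \<longleftrightarrow> [1,3,4,2::nat] ! a < [1,3,4,2] ! b"
    using val by (simp add: All_less_Suc2)
  then show "contains_pattern xs [1,3,4,2]"
    unfolding contains_pattern_def using pos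
    by (intro exI[of _ "[i,j,l,m]"]) (simp add: numeral_eq_Suc)
qed

definition cyclically_ordered :: "nat \<Rightarrow> nat \<Rightarrow> nat \<Rightarrow> nat \<Rightarrow> bool" where
  "cyclically_ordered i j l m \<longleftrightarrow>
     (i < j \<and> j < l \<and> l < m) \<or> (j < l \<and> l < m \<and> m < i) \<or>
     (l < m \<and> m < i \<and> i < j) \<or> (m < i \<and> i < j \<and> j < l)"

definition occurs_1342_cyclically :: "nat list \<Rightarrow> bool" where
  "occurs_1342_cyclically xs \<longleftrightarrow> (\<exists>i j l m.
      i < length xs \<and> j < length xs \<and> l < length xs \<and> m < length xs \<and>
      cyclically_ordered i j l m \<and> xs ! i < xs ! m \<and> xs ! m < xs ! j \<and> xs ! j < xs ! l)"

lemma occurs_1342_cyclicallyI: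
  assumes "i < length xs" "j < length xs" "l < length xs" "m < length xs"
    and "cyclically_ordered i j l m" "xs ! i < xs ! m" "xs ! m < xs ! j" "xs ! j < xs ! l"
  shows "occurs_1342_cyclically xs"
  using assms unfolding occurs_1342_cyclically_def by blast

lemma occurs_1342_rotate_imp_cyclically:
  assumes "s < length xs" "occurs_1342 (rotate s xs)"
  shows "occurs_1342_cyclically xs"
proof -
  let ?n = "length xs"
  obtain i j l m where pos: "i < j" "j < l" "l < m" "m < ?n"
    and val: "rotate s xs ! i < rotate s xs ! m" "rotate s xs ! m < rotate s xs ! j"
      "rotate s xs ! j < rotate s xs ! l"
    using assms(2) by (auto simp: occurs_1342_def)
  define P where "P t = (if s + t < ?n then s + t else s + t - ?n)" for t
  have P: "rotate s xs ! t = xs ! P t" "P t < ?n" if "t < ?n" for t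
  proof -
    have "(s + t) mod ?n = P t"
      using assms(1) that by (simp add: P_def mod_if)
    then show "rotate s xs ! t = xs ! P t"
      using nth_rotate[OF that] by simp
    show "P t < ?n"
      using assms(1) that by (auto simp: P_def)
  qed
  have "cyclically_ordered (P i) (P j) (P l) (P m)"
    using assms(1) pos unfolding P_def cyclically_ordered_def by (simp split: if_splits) linarith
  then show ?thesis
    unfolding occurs_1342_cyclically_def using pos val P[of i] P[of j] P[of l] P[of m]
    by (intro exI[of _ "P i"] exI[of _ "P j"] exI[of _ "P l"] exI[of _ "P m"]) simp
qed

lemma occurs_1342_cyclically_imp_rotate:
  assumes "occurs_1342_cyclically xs"
  shows "\<exists>s<length xs. occurs_1342 (rotate s xs)"
proof -
  let ?n = "length xs"
  obtain i j l m where pos: "i < ?n" "j < ?n" "l < ?n" "m < ?n" "cyclically_ordered i j l m"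
    and val: "xs ! i < xs ! m" "xs ! m < xs ! j" "xs ! j < xs ! l"
    using assms by (auto simp: occurs_1342_cyclically_def)
  define T where "T t = (if i \<le> t then t - i else t + ?n - i)" for t
  have T: "rotate i xs ! T t = xs ! t" "T t < ?n" if "t < ?n" for t
  proof -
    show "T t < ?n"
      using that pos by (auto simp: T_def)
    moreover have "(i + T t) mod ?n = t"
      using that pos by (auto simp: T_def)
    ultimately show "rotate i xs ! T t = xs ! t"
      using nth_rotate[of "T t" xs i] by simp
  qed
  have "T i < T j" "T j < T l" "T l < T m"
    using pos unfolding T_def cyclically_ordered_def by auto
  then have "occurs_1342 (rotate i xs)"
    unfolding occurs_1342_def using pos val T[of i] T[of j] T[of l] T[of m]
    by (intro exI[of _ "T i"] exI[of _ "T j"] exI[of _ "T l"] exI[of _ "T m"]) simp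
  then show ?thesis
    using pos(1) by blast
qed

lemma occurs_1342_cyclically_map_strict_mono:
  assumes "strict_mono h"
  shows "occurs_1342_cyclically (map h xs) \<longleftrightarrow> occurs_1342_cyclically xs"
  by (simp add: occurs_1342_cyclically_def strict_mono_less[OF assms] cong: conj_cong)

lemma cyclically_ordered_Suc:
  "cyclically_ordered (Suc i) (Suc j) (Suc l) (Suc m) \<longleftrightarrow> cyclically_ordered i j l m"
  unfolding cyclically_ordered_def by auto

lemma occurs_1342_cyclically_Cons:
  assumes "occurs_1342_cyclically ys"
  shows "occurs_1342_cyclically (x # ys)"
proof -
  obtain i j l m where "i < length ys" "j < length ys" "l < length ys" "m < length ys"
      "cyclically_ordered i j l m" "ys ! i < ys ! m" "ys ! m < ys ! j" "ys ! j < ys ! l"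
    using assms unfolding occurs_1342_cyclically_def by blast
  then show ?thesis
    by (intro occurs_1342_cyclicallyI[of "Suc i" _ "Suc j" "Suc l" "Suc m"])
      (simp_all add: cyclically_ordered_Suc)
qed

text \<open>A new first letter that is smaller than everything else cannot create a cyclic 1342:
  it could only play the role of the 1, and the old first letter, the minimum of \<open>ys\<close>,
  can play that role instead.\<close>

lemma occurs_1342_cyclically_Cons_minD:
  assumes "occurs_1342_cyclically (x # ys)"
    and min: "\<forall>i<length ys. x < ys ! i" and first: "\<forall>i<length ys. 0 < i \<longrightarrow> ys ! 0 < ys ! i"
  shows "occurs_1342_cyclically ys"
proof -
  obtain i j l m where pos: "i < Suc (length ys)" "j < Suc (length ys)" "l < Suc (length ys)"
      "m < Suc (length ys)" "cyclically_ordered i j l m"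
    and val: "(x # ys) ! i < (x # ys) ! m" "(x # ys) ! m < (x # ys) ! j" "(x # ys) ! j < (x # ys) ! l"
    using assms(1) unfolding occurs_1342_cyclically_def by auto
  have nonzero: "t \<noteq> 0" if "s < Suc (length ys)" "(x # ys) ! s < (x # ys) ! t" for s t
  proof
    assume "t = 0"
    then show False
      using min that by (cases s) auto
  qed
  obtain j' l' m' where jlm: "j = Suc j'" "l = Suc l'" "m = Suc m'"
    using nonzero[OF pos(1) val(1)] nonzero[OF pos(4) val(2)] nonzero[OF pos(2) val(3)]
    by (metis not0_implies_Suc)
  show ?thesis
  proof (cases i)
    case (Suc i')
    then show ?thesis
      using pos val jlm cyclically_ordered_Suc[of i' j' l' m']
      by (intro occurs_1342_cyclicallyI[of i' ys j' l' m']) simp_all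
  next
    case 0
    then have "j' < l'" "l' < m'"
      using pos(5) jlm unfolding cyclically_ordered_def by auto
    moreover have "j' \<noteq> 0"
    proof
      assume "j' = 0"
      then have "ys ! 0 < ys ! m'"
        using first pos(4) jlm \<open>j' < l'\<close> \<open>l' < m'\<close> by simp
      then show False
        using val(2) jlm \<open>j' = 0\<close> by simp
    qed
    ultimately show ?thesis
      using first pos val jlm
      by (intro occurs_1342_cyclicallyI[of 0 ys j' l' m']) (auto simp: cyclically_ordered_def)
  qed
qed

lemma occurs_1342_cyclically_append:
  assumes "occurs_1342_cyclically xs"
  shows "occurs_1342_cyclically (xs @ ys)"
proof -
  obtain i j l m where "i < length xs" "j < length xs" "l < length xs" "m < length xs"
      "cyclically_ordered i j l m" "xs ! i < xs ! m" "xs ! m < xs ! j" "xs ! j < xs ! l"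
    using assms unfolding occurs_1342_cyclically_def by blast
  then show ?thesis
    by (intro occurs_1342_cyclicallyI[of i _ j l m]) (simp_all add: nth_append)
qed

definition decreasing_positions :: "nat list \<Rightarrow> nat list \<Rightarrow> bool" where
  "decreasing_positions xs I \<longleftrightarrow>
     sorted_wrt (<) I \<and> (\<forall>i\<in>set I. i < length xs) \<and> sorted_wrt (\<lambda>i j. xs ! j < xs ! i) I"

definition has_decreasing_subseq :: "nat list \<Rightarrow> nat \<Rightarrow> bool" where
  "has_decreasing_subseq xs k \<longleftrightarrow> (\<exists>I. decreasing_positions xs I \<and> length I = k)"

lemma nth_delta: "i < k \<Longrightarrow> delta k ! i = k - i"
  unfolding delta_def by (subst rev_nth) (auto simp: nth_append)

lemma length_delta [simp]: "length (delta k) = k"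
  by (simp add: delta_def)

lemma contains_pattern_delta_iff: "contains_pattern xs (delta k) \<longleftrightarrow> has_decreasing_subseq xs k"
proof -
  have "(\<forall>i<k. \<forall>j<k. xs ! (I ! i) < xs ! (I ! j) \<longleftrightarrow> delta k ! i < delta k ! j)
      \<longleftrightarrow> sorted_wrt (\<lambda>i j. xs ! j < xs ! i) I" if "length I = k" for I
  proof
    assume "\<forall>i<k. \<forall>j<k. xs ! (I ! i) < xs ! (I ! j) \<longleftrightarrow> delta k ! i < delta k ! j"
    then show "sorted_wrt (\<lambda>i j. xs ! j < xs ! i) I"
      using that by (auto simp: sorted_wrt_iff_nth_less nth_delta)
  next
    assume dec: "sorted_wrt (\<lambda>i j. xs ! j < xs ! i) I"
    show "\<forall>i<k. \<forall>j<k. xs ! (I ! i) < xs ! (I ! j) \<longleftrightarrow> delta k ! i < delta k ! j"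
    proof (intro allI impI)
      fix i j assume "i < k" "j < k"
      then have "i < j \<Longrightarrow> xs ! (I ! j) < xs ! (I ! i)" "j < i \<Longrightarrow> xs ! (I ! i) < xs ! (I ! j)"
        using dec that by (auto simp: sorted_wrt_iff_nth_less)
      then show "xs ! (I ! i) < xs ! (I ! j) \<longleftrightarrow> delta k ! i < delta k ! j"
        using \<open>i < k\<close> \<open>j < k\<close> nth_delta[of i k] nth_delta[of j k] by (cases i j rule: linorder_cases) auto
    qed
  qed
  then show ?thesis
    unfolding contains_pattern_def has_decreasing_subseq_def decreasing_positions_def length_delta
    by blast
qed

lemma decreasing_positions_transfer:
  assumes "decreasing_positions xs I" "\<forall>i\<in>set I. i < length ys"
    and "\<And>i j. i \<in> set I \<Longrightarrow> j \<in> set I \<Longrightarrow> xs ! j < xs ! i \<Longrightarrow> ys ! j < ys ! i"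
  shows "decreasing_positions ys I"
  using assms sorted_wrt_mono_rel[of I "\<lambda>i j. xs ! j < xs ! i" "\<lambda>i j. ys ! j < ys ! i"]
  unfolding decreasing_positions_def by blast

lemma decreasing_positions_Cons:
  "decreasing_positions xs (i # I) \<longleftrightarrow>
     i < length xs \<and> (\<forall>j\<in>set I. i < j \<and> xs ! j < xs ! i) \<and> decreasing_positions xs I"
  by (auto simp: decreasing_positions_def)

lemma decreasing_positions_append:
  "decreasing_positions xs (I @ J) \<longleftrightarrow> decreasing_positions xs I \<and> decreasing_positions xs J \<and>
     (\<forall>i\<in>set I. \<forall>j\<in>set J. i < j \<and> xs ! j < xs ! i)"
  by (auto simp: decreasing_positions_def sorted_wrt_append)

lemma decreasing_positions_list_update_notin:
  assumes "p \<notin> set I"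
  shows "decreasing_positions (xs[p := v]) I \<longleftrightarrow> decreasing_positions xs I"
proof -
  have eq: "xs[p := v] ! i = xs ! i" if "i \<in> set I" for i
    using assms that by (metis nth_list_update_neq)
  show ?thesis
  proof
    assume dec: "decreasing_positions (xs[p := v]) I"
    show "decreasing_positions xs I"
      using dec by (intro decreasing_positions_transfer[OF dec]) (auto simp: decreasing_positions_def eq)
  next
    assume dec: "decreasing_positions xs I"
    show "decreasing_positions (xs[p := v]) I"
      using dec by (intro decreasing_positions_transfer[OF dec]) (auto simp: decreasing_positions_def eq)
  qed
qed

lemma has_decreasing_subseq_map_strict_mono:
  assumes "strict_mono h"
  shows "has_decreasing_subseq (map h xs) k \<longleftrightarrow> has_decreasing_subseq xs k"
proof -
  have "decreasing_positions (map h xs) I \<longleftrightarrow> decreasing_positions xs I" for I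
    using decreasing_positions_transfer[of "map h xs" I xs] decreasing_positions_transfer[of xs I "map h xs"]
      strict_mono_less[OF assms] by (auto simp: decreasing_positions_def)
  then show ?thesis
    by (simp add: has_decreasing_subseq_def)
qed

lemma decreasing_positions_Cons_map_Suc:
  "decreasing_positions (x # xs) (map Suc I) \<longleftrightarrow> decreasing_positions xs I"
  by (auto simp: decreasing_positions_def sorted_wrt_map)

lemma has_decreasing_subseq_Cons_two:
  assumes "3 \<le> k" "\<forall>y\<in>set ys. 0 < y"
  shows "has_decreasing_subseq (2 # ys) k \<longleftrightarrow> has_decreasing_subseq ys k"
proof
  assume "has_decreasing_subseq ys k"
  then obtain I where "decreasing_positions ys I" "length I = k"
    by (auto simp: has_decreasing_subseq_def)
  then show "has_decreasing_subseq (2 # ys) k"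
    unfolding has_decreasing_subseq_def
    by (intro exI[of _ "map Suc I"]) (simp add: decreasing_positions_Cons_map_Suc)
next
  assume "has_decreasing_subseq (2 # ys) k"
  then obtain I where dec: "decreasing_positions (2 # ys) I" and len: "length I = k"
    by (auto simp: has_decreasing_subseq_def)
  have "0 \<notin> set I"
  proof
    assume "0 \<in> set I"
    obtain i0 i1 i2 rest where I: "I = i0 # i1 # i2 # rest"
      using len assms(1) by (auto simp: Suc_le_length_iff numeral_3_eq_3)
    have "i0 = 0"
      using \<open>0 \<in> set I\<close> dec by (auto simp: I decreasing_positions_def)
    then have "0 < i1" "i1 < i2" "i2 < Suc (length ys)"
      and "ys ! (i1 - 1) < 2" "ys ! (i2 - 1) < ys ! (i1 - 1)"
      using dec by (auto simp: I decreasing_positions_def nth_Cons')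
    moreover have "0 < ys ! (i2 - 1)"
      using assms(2) \<open>0 < i1\<close> \<open>i1 < i2\<close> \<open>i2 < Suc (length ys)\<close> by auto
    ultimately show False
      by linarith
  qed
  then have "I = map Suc (map (\<lambda>i. i - 1) I)"
    by (induction I) auto
  then have "decreasing_positions ys (map (\<lambda>i. i - 1) I)"
    using dec decreasing_positions_Cons_map_Suc[of 2 ys "map (\<lambda>i. i - 1) I"] by simp
  then show "has_decreasing_subseq ys k"
    unfolding has_decreasing_subseq_def using len by (intro exI[of _ "map (\<lambda>i. i - 1) I"]) simp
qed

text \<open>In an increasing tail, a decreasing subsequence uses at most one letter.\<close>

lemma has_decreasing_subseq_append_increasing:
  assumes inc: "sorted_wrt (<) ys" and "ys \<noteq> []" and below: "\<forall>x\<in>set xs. hd ys < x"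
  shows "has_decreasing_subseq (xs @ ys) (Suc k) \<longleftrightarrow> has_decreasing_subseq xs k"
proof
  assume "has_decreasing_subseq (xs @ ys) (Suc k)"
  then obtain J v where dec: "decreasing_positions (xs @ ys) (J @ [v])" and len: "length J = k"
    by (auto simp: has_decreasing_subseq_def length_Suc_conv_rev)
  have in_xs: "u < length xs" if "u \<in> set J" for u
  proof (rule ccontr)
    assume "\<not> u < length xs"
    moreover have "u < v" "v < length (xs @ ys)" "(xs @ ys) ! v < (xs @ ys) ! u"
      using dec that by (auto simp: decreasing_positions_append decreasing_positions_Cons)
    ultimately have "ys ! (v - length xs) < ys ! (u - length xs)"
      and "u - length xs < v - length xs" "v - length xs < length ys"
      by (auto simp: nth_append)
    moreover have "ys ! (u - length xs) < ys ! (v - length xs)"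
      using inc \<open>u - length xs < v - length xs\<close> \<open>v - length xs < length ys\<close>
      unfolding sorted_wrt_iff_nth_less by blast
    ultimately show False
      by simp
  qed
  have "decreasing_positions xs J"
    using dec in_xs
    by (intro decreasing_positions_transfer[of "xs @ ys" J xs])
      (auto simp: decreasing_positions_append nth_append)
  then show "has_decreasing_subseq xs k"
    using len by (auto simp: has_decreasing_subseq_def)
next
  assume "has_decreasing_subseq xs k"
  then obtain I where dec: "decreasing_positions xs I" and len: "length I = k"
    by (auto simp: has_decreasing_subseq_def)
  have "decreasing_positions (xs @ ys) I"
    using dec by (intro decreasing_positions_transfer[OF dec]) (auto simp: decreasing_positions_def nth_append)
  moreover have "decreasing_positions (xs @ ys) [length xs]"
    using \<open>ys \<noteq> []\<close> by (simp add: decreasing_positions_def)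
  moreover have "\<forall>i\<in>set I. i < length xs \<and> (xs @ ys) ! length xs < (xs @ ys) ! i"
    using dec below \<open>ys \<noteq> []\<close> by (auto simp: decreasing_positions_def nth_append hd_conv_nth)
  ultimately have "decreasing_positions (xs @ ys) (I @ [length xs])"
    by (simp add: decreasing_positions_append)
  then show "has_decreasing_subseq (xs @ ys) (Suc k)"
    unfolding has_decreasing_subseq_def using len by (intro exI[of _ "I @ [length xs]"]) simp
qed

text \<open>The raised letter can only start a decreasing subsequence, and the first letter, the
  maximum of \<open>xs\<close>, can replace it.\<close>

lemma has_decreasing_subseq_list_update_greater:
  assumes "distinct xs" "\<forall>i<length xs. xs ! i \<le> xs ! 0" "0 < p" "p < length xs" "\<forall>x\<in>set xs. x < v"
    and "has_decreasing_subseq (xs[p := v]) k"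
  shows "has_decreasing_subseq xs k"
proof -
  obtain I where dec: "decreasing_positions (xs[p := v]) I" and len: "length I = k"
    using assms(6) by (auto simp: has_decreasing_subseq_def)
  show ?thesis
  proof (cases "p \<in> set I")
    case False
    then show ?thesis
      using dec len decreasing_positions_list_update_notin by (auto simp: has_decreasing_subseq_def)
  next
    case True
    then obtain A B where I: "I = A @ p # B"
      by (meson split_list)
    have "set A = {}"
    proof (rule equals0I)
      fix a assume "a \<in> set A"
      then have "a < p" "xs[p := v] ! p < xs[p := v] ! a"
        using dec by (auto simp: I decreasing_positions_append decreasing_positions_Cons)
      moreover have "xs ! a < v"
        using assms(4,5) \<open>a < p\<close> by (meson nth_mem order.strict_trans)
      ultimately show False
        using assms(4) by (auto simp: nth_list_update)
    qed
    then have "A = []"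
      by simp
    have "decreasing_positions (xs[p := v]) B" "\<forall>b\<in>set B. p < b"
      using dec \<open>A = []\<close> by (auto simp: I decreasing_positions_Cons)
    then have "decreasing_positions xs B"
      using decreasing_positions_list_update_notin by auto
    moreover have "\<forall>b\<in>set B. 0 < b \<and> xs ! b < xs ! 0"
      using \<open>\<forall>b\<in>set B. p < b\<close> \<open>decreasing_positions xs B\<close> assms(1-3) nth_eq_iff_index_eq[OF assms(1)]
      by (fastforce simp: decreasing_positions_def order.order_iff_strict)
    moreover have "0 < length xs"
      using assms(4) by linarith
    ultimately have "decreasing_positions xs (0 # B)"
      by (simp add: decreasing_positions_Cons)
    then show ?thesis
      unfolding has_decreasing_subseq_def using len I \<open>A = []\<close> by (intro exI[of _ "0 # B"]) simp
  qed
qed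

text \<open>The letter 1 can only end a decreasing subsequence, and a later 2 can replace it.\<close>

lemma decreasing_positions_avoid_one:
  assumes "distinct xs" "\<forall>x\<in>set xs. 1 \<le> x" "p < q" "q < length xs" "xs ! p = 1" "xs ! q = 2"
    and dec: "decreasing_positions xs I"
  obtains J where "decreasing_positions xs J" "length J = length I" "p \<notin> set J"
proof (cases "p \<in> set I")
  case True
  then obtain A B where I: "I = A @ p # B"
    by (meson split_list)
  have "set B = {}"
  proof (rule equals0I)
    fix b assume "b \<in> set B"
    then have "xs ! b < xs ! p" "decreasing_positions xs B"
      using dec by (auto simp: I decreasing_positions_append decreasing_positions_Cons)
    then show False
      using \<open>b \<in> set B\<close> assms(2,5) nth_mem by (fastforce simp: decreasing_positions_def)
  qed
  have A: "decreasing_positions xs A" "\<forall>a\<in>set A. a < p \<and> xs ! p < xs ! a"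
    using dec by (auto simp: I decreasing_positions_append decreasing_positions_Cons)
  have "\<forall>a\<in>set A. a < q \<and> xs ! q < xs ! a"
  proof
    fix a assume "a \<in> set A"
    then have "a < q" "1 < xs ! a"
      using A assms(3,5) by auto
    moreover have "xs ! a \<noteq> 2"
      using nth_eq_iff_index_eq[OF assms(1), of a q] A(1) \<open>a \<in> set A\<close> \<open>a < q\<close> assms(4,6)
      by (auto simp: decreasing_positions_def)
    ultimately show "a < q \<and> xs ! q < xs ! a"
      using assms(6) by simp
  qed
  moreover have "decreasing_positions xs [q]"
    using assms(4) by (simp add: decreasing_positions_def)
  ultimately have "decreasing_positions xs (A @ [q])"
    using A(1) by (simp add: decreasing_positions_append)
  moreover have "p \<notin> set (A @ [q])"
    using A(2) assms(3) by auto
  ultimately show thesis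
    using that I \<open>set B = {}\<close> by simp
qed (use dec that in blast)

lemma has_decreasing_subseq_list_update_one:
  assumes "distinct xs" "\<forall>x\<in>set xs. 1 \<le> x" "p < q" "q < length xs" "xs ! p = 1" "xs ! q = 2"
    and "has_decreasing_subseq xs k"
  shows "has_decreasing_subseq (xs[p := v]) k"
proof -
  obtain I where "decreasing_positions xs I" "length I = k"
    using assms(7) by (auto simp: has_decreasing_subseq_def)
  then obtain J where "decreasing_positions xs J" "length J = k" "p \<notin> set J"
    using decreasing_positions_avoid_one[OF assms(1-6)] by metis
  then show ?thesis
    using decreasing_positions_list_update_notin unfolding has_decreasing_subseq_def by blast
qed

section \<open>Good cycle words\<close>

definition good_words :: "nat \<Rightarrow> nat \<Rightarrow> nat list set" where
  "good_words n k = {c \<in> cycle_words n.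
     \<not> has_decreasing_subseq (one_line n (cycle_of_list c)) k \<and> \<not> occurs_1342_cyclically c}"

lemma rotations_avoid_1342_iff:
  assumes "c \<in> cycle_words n" "0 < n"
  shows "(\<forall>w\<in>cyclic_rotations n (cycle_of_list c). avoids w [1,3,4,2])
    \<longleftrightarrow> \<not> occurs_1342_cyclically c"
proof -
  have len: "length c = n"
    using assms(1) by (simp add: cycle_words_def)
  have rotations: "cyclic_rotations n (cycle_of_list c) = {rotate s c | s. s < n}"
    using cycle_form_cycle_of_list[OF assms(1)] by (simp add: cyclic_rotations_def)
  have "(\<forall>w\<in>cyclic_rotations n (cycle_of_list c). avoids w [1,3,4,2])
      \<longleftrightarrow> \<not> (\<exists>s<n. occurs_1342 (rotate s c))"
    unfolding rotations avoids_def contains_pattern_1342_iff by blast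
  also have "\<dots> \<longleftrightarrow> \<not> occurs_1342_cyclically c"
    using occurs_1342_rotate_imp_cyclically occurs_1342_cyclically_imp_rotate len by blast
  finally show ?thesis .
qed

lemma cyc_avoiders_eq_image:
  assumes "0 < n"
  shows "cyc_avoiders n k = cycle_of_list ` good_words n k"
proof -
  have perms: "{\<pi>. cyclic_perm n \<pi>} = cycle_of_list ` cycle_words n"
    using bij_betw_imp_surj_on[OF bij_betw_cycle_of_list[OF assms]] by simp
  have "cyc_avoiders n k = {\<pi> \<in> cycle_of_list ` cycle_words n.
      avoids (one_line n \<pi>) (delta k) \<and> (\<forall>w\<in>cyclic_rotations n \<pi>. avoids w [1,3,4,2])}"
    by (simp add: cyc_avoiders_def perms[symmetric])
  also have "\<dots> = cycle_of_list ` {c \<in> cycle_words n.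
      avoids (one_line n (cycle_of_list c)) (delta k) \<and>
      (\<forall>w\<in>cyclic_rotations n (cycle_of_list c). avoids w [1,3,4,2])}"
    by blast
  also have "{c \<in> cycle_words n. avoids (one_line n (cycle_of_list c)) (delta k) \<and>
      (\<forall>w\<in>cyclic_rotations n (cycle_of_list c). avoids w [1,3,4,2])} = good_words n k"
    using rotations_avoid_1342_iff[OF _ assms]
    by (auto simp: good_words_def avoids_def contains_pattern_delta_iff)
  finally show ?thesis .
qed

lemma inj_on_cycle_of_list_good_words: "0 < n \<Longrightarrow> inj_on cycle_of_list (good_words n k)"
  by (rule inj_on_subset[OF bij_betw_imp_inj_on[OF bij_betw_cycle_of_list]])
    (auto simp: good_words_def)

lemma a_circ_1342_eq_card: "0 < n \<Longrightarrow> a_circ_1342 n k = card (good_words n k)"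
  by (simp add: a_circ_1342_def cyc_avoiders_eq_image card_image inj_on_cycle_of_list_good_words)

lemma b_circ_1342_eq_card:
  assumes "1 < n"
  shows "b_circ_1342 n k = card {c \<in> good_words n k. c ! 1 = n}"
proof -
  have second: "\<forall>c\<in>good_words n k. cycle_of_list c 1 = c ! 1"
    using cycle_of_list_one[OF _ assms] by (simp add: good_words_def)
  have "{\<pi> \<in> cyc_avoiders n k. \<pi> 1 = n} = {\<pi> \<in> cycle_of_list ` good_words n k. \<pi> 1 = n}"
    using cyc_avoiders_eq_image[of n k] assms by simp
  also have "\<dots> = cycle_of_list ` {c \<in> good_words n k. cycle_of_list c 1 = n}"
    by blast
  also have "{c \<in> good_words n k. cycle_of_list c 1 = n} = {c \<in> good_words n k. c ! 1 = n}"
    using second by force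
  finally have "{\<pi> \<in> cyc_avoiders n k. \<pi> 1 = n} = cycle_of_list ` {c \<in> good_words n k. c ! 1 = n}" .
  moreover have "inj_on cycle_of_list {c \<in> good_words n k. c ! 1 = n}"
    using assms by (intro inj_on_subset[OF inj_on_cycle_of_list_good_words[of n k]]) auto
  ultimately show ?thesis
    by (simp add: b_circ_1342_def card_image)
qed

lemma finite_good_words: "finite (good_words n k)"
proof (rule finite_subset)
  show "good_words n k \<subseteq> {xs. set xs \<subseteq> {1..n} \<and> length xs = n}"
    by (auto simp: good_words_def cycle_words_def)
qed (simp add: finite_lists_length_eq)

lemma card_good_words_eq_sum_second_letter:
  assumes "2 \<le> n"
  shows "card (good_words n k) = (\<Sum>v = 2..n. card {c \<in> good_words n k. c ! 1 = v})"
proof -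
  have "c ! 1 \<in> {2..n}" if "c \<in> good_words n k" for c
    using cycle_words_nth_mem[of c n 1] cycle_words_nth_eq_one_iff[of c n 1] that assms
    by (force simp: good_words_def)
  then have "(\<Sum>v = 2..n. \<Sum>c\<in>{c \<in> good_words n k. c ! 1 = v}. 1) = (\<Sum>c\<in>good_words n k. 1::nat)"
    by (intro sum.group finite_good_words) auto
  then show ?thesis
    by simp
qed

section \<open>Second letter 2\<close>

definition skip_two :: "nat \<Rightarrow> nat" where
  "skip_two y = (if y \<le> 1 then y else Suc y)"

lemma strict_mono_skip_two: "strict_mono skip_two"
  by (rule strict_monoI) (auto simp: skip_two_def)

lemma cycle_words_insert_one:
  assumes "d \<in> cycle_words m"
  shows "1 # map Suc d \<in> cycle_words (Suc m)"
proof -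
  have "insert 1 (Suc ` {1..m}) = {1..Suc m}"
    by auto
  then show ?thesis
    using assms by (auto simp: cycle_words_def distinct_map)
qed

lemma cycle_words_second_two_cases:
  assumes "c \<in> cycle_words (Suc m)" "c ! 1 = 2" "1 \<le> m"
  obtains d where "d \<in> cycle_words m" "c = 1 # map Suc d"
proof -
  have c: "distinct c" "set c = {1..Suc m}" "length c = Suc m" "c ! 0 = 1"
    using assms(1) by (auto simp: cycle_words_def)
  then obtain t where t: "c = 1 # t"
    by (cases c) auto
  have "set t = set c - {1}"
    using c(1) t by auto
  also have "\<dots> = {2..Suc m}"
    using c(2) by auto
  finally have set_t: "set t = {2..Suc m}" .
  define d where "d = map (\<lambda>x. x - 1) t"
  have t_d: "t = map Suc d"
    unfolding d_def map_map by (rule map_idI[symmetric]) (use set_t in auto)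
  have "Suc ` set d = Suc ` {1..m}"
    using set_t t_d by simp
  then have "set d = {1..m}"
    using inj_image_eq_iff[OF inj_Suc] by blast
  moreover have "d ! 0 = 1"
    using assms(2,3) c(3) t t_d by (cases d) auto
  ultimately have "d \<in> cycle_words m"
    using c t t_d by (simp add: cycle_words_def distinct_map)
  then show thesis
    using that t t_d by blast
qed

lemma cycle_of_list_insert_one:
  assumes "d \<in> cycle_words m" "1 \<le> m"
  shows "cycle_of_list (1 # map Suc d) 1 = 2"
    and "y \<in> {1..m} \<Longrightarrow> cycle_of_list (1 # map Suc d) (Suc y) = skip_two (cycle_of_list d y)"
proof -
  have d: "distinct d" "set d = {1..m}" "length d = m" "d ! 0 = 1"
    using assms(1) by (auto simp: cycle_words_def)
  then obtain d' where "d = 1 # d'"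
    using assms(2) by (cases d) auto
  then have shift: "cycle_of_list (1 # map Suc d) = Transposition.transpose 1 2 \<circ> cycle_of_list (map Suc d)"
    by (simp add: numeral_2_eq_2)
  have "1 \<notin> set (map Suc d)"
    using d(2) by auto
  note fixed = id_outside_supp[OF this]
  show "cycle_of_list (1 # map Suc d) 1 = 2"
    unfolding shift comp_apply fixed by simp
  assume "y \<in> {1..m}"
  then have "cycle_of_list (map Suc d) (Suc y) = Suc (cycle_of_list d y)"
    and "cycle_of_list d y \<in> {1..m}"
    using cycle_of_list_map[OF d(1) inj_Suc] cycle_permutes[of d] d(2) by (auto dest: permutes_in_image)
  then show "cycle_of_list (1 # map Suc d) (Suc y) = skip_two (cycle_of_list d y)"
    unfolding shift comp_apply by (auto simp: skip_two_def transpose_def)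
qed

lemma one_line_insert_one:
  assumes "d \<in> cycle_words m" "1 \<le> m"
  shows "one_line (Suc m) (cycle_of_list (1 # map Suc d)) = 2 # map skip_two (one_line m (cycle_of_list d))"
proof -
  have "[1..<Suc m + 1] = 1 # map Suc [1..<m + 1]"
    by (simp add: upt_conv_Cons map_Suc_upt del: upt_Suc)
  moreover have "map (cycle_of_list (1 # map Suc d)) (map Suc [1..<m + 1])
      = map skip_two (map (cycle_of_list d) [1..<m + 1])"
    unfolding map_map
    by (rule map_cong[OF refl]) (use cycle_of_list_insert_one(2)[OF assms] in \<open>auto simp del: upt_Suc\<close>)
  ultimately show ?thesis
    using cycle_of_list_insert_one(1)[OF assms] by (simp add: one_line_def del: upt_Suc)
qed

lemma occurs_1342_cyclically_insert_one:
  assumes "d \<in> cycle_words m"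
  shows "occurs_1342_cyclically (1 # map Suc d) \<longleftrightarrow> occurs_1342_cyclically d"
proof -
  have len: "length d = m" "d ! 0 = 1"
    using assms by (simp_all add: cycle_words_def)
  have "\<forall>i<length (map Suc d). 1 < map Suc d ! i"
  proof (intro allI impI)
    fix i assume "i < length (map Suc d)"
    then show "1 < map Suc d ! i"
      using cycle_words_nth_mem[OF assms, of i] len by simp
  qed
  moreover have "\<forall>i<length (map Suc d). 0 < i \<longrightarrow> map Suc d ! 0 < map Suc d ! i"
  proof (intro allI impI)
    fix i assume "i < length (map Suc d)" "0 < i"
    then show "map Suc d ! 0 < map Suc d ! i"
      using cycle_words_nth_mem[OF assms, of i] cycle_words_nth_eq_one_iff[OF assms, of i] len
      by auto
  qed
  ultimately have "occurs_1342_cyclically (1 # map Suc d) \<longleftrightarrow> occurs_1342_cyclically (map Suc d)"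
    using occurs_1342_cyclically_Cons_minD[of 1 "map Suc d"] occurs_1342_cyclically_Cons by blast
  then show ?thesis
    using occurs_1342_cyclically_map_strict_mono[of Suc d] by (simp add: strict_mono_def)
qed

lemma insert_one_mem_good_words_iff:
  assumes "d \<in> cycle_words m" "1 \<le> m" "3 \<le> k"
  shows "1 # map Suc d \<in> good_words (Suc m) k \<longleftrightarrow> d \<in> good_words m k"
proof -
  have "set (one_line m (cycle_of_list d)) = {1..m}"
    using set_one_line cycle_permutes[of d] assms(1) by (simp add: cycle_words_def)
  then have "\<forall>y\<in>set (map skip_two (one_line m (cycle_of_list d))). 0 < y"
    by (auto simp: skip_two_def)
  then have "has_decreasing_subseq (one_line (Suc m) (cycle_of_list (1 # map Suc d))) k
      \<longleftrightarrow> has_decreasing_subseq (one_line m (cycle_of_list d)) k"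
    using one_line_insert_one[OF assms(1,2)] has_decreasing_subseq_Cons_two[OF assms(3)]
      has_decreasing_subseq_map_strict_mono[OF strict_mono_skip_two] by simp
  then show ?thesis
    using occurs_1342_cyclically_insert_one[OF assms(1)] cycle_words_insert_one[OF assms(1)] assms(1)
    by (simp add: good_words_def)
qed

lemma card_good_words_second_two:
  assumes "1 \<le> m" "3 \<le> k"
  shows "card {c \<in> good_words (Suc m) k. c ! 1 = 2} = card (good_words m k)"
proof -
  have "{c \<in> good_words (Suc m) k. c ! 1 = 2} = (\<lambda>d. 1 # map Suc d) ` good_words m k"
  proof
    show "{c \<in> good_words (Suc m) k. c ! 1 = 2} \<subseteq> (\<lambda>d. 1 # map Suc d) ` good_words m k"
    proof
      fix c assume c: "c \<in> {c \<in> good_words (Suc m) k. c ! 1 = 2}"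
      then obtain d where "d \<in> cycle_words m" "c = 1 # map Suc d"
        using cycle_words_second_two_cases[of c m] assms(1) by (auto simp: good_words_def)
      then show "c \<in> (\<lambda>d. 1 # map Suc d) ` good_words m k"
        using c insert_one_mem_good_words_iff[OF _ assms] by blast
    qed
    show "(\<lambda>d. 1 # map Suc d) ` good_words m k \<subseteq> {c \<in> good_words (Suc m) k. c ! 1 = 2}"
      using insert_one_mem_good_words_iff[OF _ assms] assms(1)
      by (force simp: good_words_def cycle_words_def)
  qed
  moreover have "inj (\<lambda>d. 1 # map Suc d)"
    by (simp add: inj_def)
  ultimately show ?thesis
    by (simp add: card_image inj_on_subset)
qed

section \<open>Second letter between 3 and n - 1\<close>

lemma sorted_wrt_greater_eq_rev_upt:
  assumes "sorted_wrt (>) xs" "set xs = {a..<b}"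
  shows "xs = rev [a..<b]"
proof -
  have "sorted_wrt (<) (rev xs)"
    using assms(1) by (simp add: sorted_wrt_rev)
  then have "rev xs = [a..<b]"
    using assms(2) by (intro sorted_distinct_set_unique) (auto simp: strict_sorted_iff)
  then show ?thesis
    by (metis rev_rev_ident)
qed

definition append_descending :: "nat list \<Rightarrow> nat \<Rightarrow> nat list" where
  "append_descending s n = s @ rev [Suc (length s)..<Suc n]"

lemma length_append_descending: "length s \<le> n \<Longrightarrow> length (append_descending s n) = n"
  by (simp add: append_descending_def)

lemma nth_append_descending_head: "i < length s \<Longrightarrow> append_descending s n ! i = s ! i"
  by (simp add: append_descending_def nth_append)

lemma nth_append_descending_tail:
  assumes "length s \<le> i" "i < n"
  shows "append_descending s n ! i = n + length s - i"
proof -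
  have "append_descending s n ! i = rev [Suc (length s)..<Suc n] ! (i - length s)"
    using assms(1) by (simp add: append_descending_def nth_append)
  also have "\<dots> = n + length s - i"
    using assms by (simp add: rev_nth del: upt_Suc)
  finally show ?thesis .
qed

lemma take_append_descending: "take (length s) (append_descending s n) = s"
  by (simp add: append_descending_def)

lemma append_descending_mem_cycle_words:
  assumes "s \<in> cycle_words r" "1 \<le> r" "r \<le> n"
  shows "append_descending s n \<in> cycle_words n"
proof -
  have s: "distinct s" "set s = {1..r}" "length s = r" "s ! 0 = 1"
    using assms(1) by (auto simp: cycle_words_def)
  have "{1..r} \<union> {Suc r..n} = {1..n}"
    using assms(3) by auto
  then show ?thesis
    using s assms(2,3) by (auto simp: cycle_words_def append_descending_def nth_append)
qed

context
  fixes c :: "nat list" and n r :: nat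
  assumes word: "c \<in> cycle_words n" and second: "c ! 1 = r"
    and r: "3 \<le> r" "r < n" and no_1342: "\<not> occurs_1342_cyclically c"
begin

lemma large_letters_upward_closed:
  assumes "1 < i" "i < j" "j < n" "r < c ! i"
  shows "r < c ! j"
proof (rule ccontr)
  assume "\<not> r < c ! j"
  moreover have "c ! j \<noteq> r"
    using cycle_words_nth_eq_iff[OF word, of j 1] second assms r by auto
  ultimately have "c ! j < r"
    by simp
  moreover have "1 < c ! j"
    using cycle_words_nth_eq_one_iff[OF word, of j] cycle_words_nth_mem[OF word, of j] assms
    by fastforce
  moreover have "cyclically_ordered 0 1 i j"
    using assms by (simp add: cyclically_ordered_def)
  ultimately have "occurs_1342_cyclically c"
    using word assms second by (intro occurs_1342_cyclicallyI[of 0 c 1 i j]) (auto simp: cycle_words_def)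
  then show False
    using no_1342 by simp
qed

lemma large_letters_decreasing:
  assumes "1 < i" "i < j" "j < n" "r < c ! i" "r < c ! j"
  shows "c ! j < c ! i"
proof (rule ccontr)
  assume "\<not> c ! j < c ! i"
  then have ij: "c ! i < c ! j"
    using cycle_words_nth_eq_iff[OF word, of i j] assms by fastforce
  have "2 \<in> set c"
    using word r by (auto simp: cycle_words_def)
  then obtain y where y: "y < n" "c ! y = 2"
    using word by (auto simp: cycle_words_def in_set_conv_nth)
  have "y \<noteq> 0" "y \<noteq> 1"
    using y cycle_words_nth_eq_one_iff[OF word, of y] second r by auto
  have "\<not> i < y"
    using large_letters_upward_closed[of i y] assms y r by auto
  moreover have "y \<noteq> i"
    using y(2) assms(4) r by auto
  ultimately have "1 < y" "y < i"
    using \<open>y \<noteq> 0\<close> \<open>y \<noteq> 1\<close> by auto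
  then have "cyclically_ordered y i j 1"
    using assms by (simp add: cyclically_ordered_def)
  then have "occurs_1342_cyclically c"
    using word assms y second r ij by (intro occurs_1342_cyclicallyI[of y c i j 1]) (auto simp: cycle_words_def)
  then show False
    using no_1342 by simp
qed

text \<open>The \<open>n - r\<close> letters above \<open>r\<close> sit after position 1 and, by
  \<open>large_letters_upward_closed\<close>, after every smaller letter there; so they fill
  the last \<open>n - r\<close> positions.\<close>

lemma large_letters_at_tail:
  assumes "r \<le> i" "i < n"
  shows "r < c ! i"
proof (rule ccontr)
  assume small: "\<not> r < c ! i"
  have "{j. j < length c \<and> r < c ! j} \<subseteq> {Suc i..<n}"
  proof
    fix j assume j: "j \<in> {j. j < length c \<and> r < c ! j}"
    then have "j \<noteq> 0" "j \<noteq> 1" "j \<noteq> i"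
      using cycle_words_nth_eq_one_iff[OF word, of j] word second small r by (auto simp: cycle_words_def)
    moreover have "\<not> (1 < j \<and> j < i)"
      using large_letters_upward_closed[of j i] j small assms by auto
    ultimately show "j \<in> {Suc i..<n}"
      using j word by (auto simp: cycle_words_def)
  qed
  then have "card {j. j < length c \<and> r < c ! j} \<le> n - Suc i"
    by (metis card_atLeastLessThan card_mono finite_atLeastLessThan)
  moreover have "set (filter (\<lambda>v. r < v) c) = {Suc r..n}"
    using word by (auto simp: cycle_words_def)
  then have "card {j. j < length c \<and> r < c ! j} = n - r"
    using word distinct_card[of "filter (\<lambda>v. r < v) c"]
    by (simp add: length_filter_conv_card cycle_words_def)
  ultimately show False
    using assms by linarith
qed

lemma drop_second_letter:
  "drop r c = rev [Suc r..<Suc n]"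
proof (rule sorted_wrt_greater_eq_rev_upt)
  have len: "length c = n"
    using word by (simp add: cycle_words_def)
  show "sorted_wrt (>) (drop r c)"
    unfolding sorted_wrt_iff_nth_less
  proof (intro allI impI)
    fix i j assume "i < j" "j < length (drop r c)"
    then show "drop r c ! j < drop r c ! i"
      using large_letters_decreasing[of "r + i" "r + j"] large_letters_at_tail[of "r + i"]
        large_letters_at_tail[of "r + j"] r len by simp
  qed
  have "set (drop r c) \<subseteq> {Suc r..n}"
  proof
    fix v assume "v \<in> set (drop r c)"
    then obtain t where "t < n - r" "v = c ! (r + t)"
      using len r by (auto simp: in_set_conv_nth)
    moreover have "r + t < n"
      using \<open>t < n - r\<close> by linarith
    ultimately show "v \<in> {Suc r..n}"
      using large_letters_at_tail[of "r + t"] cycle_words_nth_mem[OF word, of "r + t"] by auto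
  qed
  moreover have "card (set (drop r c)) = card {Suc r..n}"
    using word by (simp add: cycle_words_def distinct_card)
  ultimately show "set (drop r c) = {Suc r..<Suc n}"
    using card_subset_eq[of "{Suc r..n}"] by (simp add: atLeastLessThanSuc_atLeastAtMost)
qed

lemma cycle_word_eq_append_descending:
  "take r c \<in> cycle_words r" "c = append_descending (take r c) n"
proof -
  have c: "distinct c" "set c = {1..n}" "length c = n" "c ! 0 = 1"
    using word by (auto simp: cycle_words_def)
  have "set (take r c) \<union> set (drop r c) = {1..n}" "set (take r c) \<inter> set (drop r c) = {}"
    using c(1,2) set_append[of "take r c" "drop r c"] distinct_append[of "take r c" "drop r c"] by auto
  moreover have "set (drop r c) = {Suc r..n}"
    using drop_second_letter by (simp del: upt_Suc add: atLeastLessThanSuc_atLeastAtMost)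
  ultimately have "set (take r c) = {1..n} - {Suc r..n}"
    by blast
  also have "\<dots> = {1..r}"
    using r by auto
  finally have "set (take r c) = {1..r}" .
  then show "take r c \<in> cycle_words r"
    using c r by (simp add: cycle_words_def)
  have "length (take r c) = r"
    using c(3) r by simp
  have "c = take r c @ drop r c"
    by simp
  also have "\<dots> = append_descending (take r c) n"
    using \<open>length (take r c) = r\<close> by (simp only: append_descending_def drop_second_letter)
  finally show "c = append_descending (take r c) n" .
qed

end

text \<open>The tail is decreasing and lies above \<open>s\<close>, so only the 4 of an occurrence can lie
  in it.\<close>

lemma append_descending_1342_positions:
  assumes len: "length s = r" and small: "\<forall>x\<in>set s. x \<le> r" and r: "r < n"
    and pos: "i < n" "j < n" "l < n" "m < n" "cyclically_ordered i j l m"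
    and val: "append_descending s n ! i < append_descending s n ! m"
      "append_descending s n ! m < append_descending s n ! j"
      "append_descending s n ! j < append_descending s n ! l"
  shows "i < r" "j < r" "m < r"
proof -
  let ?c = "append_descending s n"
  have tail: "?c ! t = n + r - t" if "r \<le> t" "t < n" for t
    using that len nth_append_descending_tail[of s t n] by simp
  have large_iff: "r < ?c ! t \<longleftrightarrow> r \<le> t" if "t < n" for t
  proof (cases "t < r")
    case True
    then have "s ! t \<le> r"
      using small len by (metis nth_mem)
    then show ?thesis
      using True len nth_append_descending_head[of t s n] by simp
  qed (use that tail[of t] in simp)
  show "m < r"
  proof (rule ccontr)
    assume "\<not> m < r"
    then have "r \<le> j" "r \<le> l"
      using large_iff[of m] large_iff[of j] large_iff[of l] pos(2-4) val(2,3) by simp_all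
    then have "l < j" "j < m"
      using tail[of j] tail[of l] tail[of m] pos(2-4) val(2,3) \<open>\<not> m < r\<close> by simp_all
    then show False
      using pos(5) by (auto simp: cyclically_ordered_def)
  qed
  show "j < r"
  proof (rule ccontr)
    assume "\<not> j < r"
    then have "r \<le> l"
      using large_iff[of j] large_iff[of l] pos(2,3) val(3) by simp
    then have "l < j"
      using tail[of j] tail[of l] pos(2,3) val(3) \<open>\<not> j < r\<close> by simp
    then show False
      using pos(5) \<open>m < r\<close> \<open>r \<le> l\<close> by (auto simp: cyclically_ordered_def)
  qed
  show "i < r"
    using large_iff[of i] large_iff[of m] pos(1,4) val(1) \<open>m < r\<close> by simp
qed

text \<open>If the 4 of an occurrence lies in the tail, the second letter \<open>r\<close> can replace it.\<close>

lemma append_descending_no_1342: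
  assumes s: "s \<in> cycle_words r" and second: "s ! 1 = r" and r: "2 \<le> r" "r < n"
    and no_1342: "\<not> occurs_1342_cyclically s"
  shows "\<not> occurs_1342_cyclically (append_descending s n)"
proof
  let ?c = "append_descending s n"
  have len: "length s = r" "length ?c = n" "\<forall>x\<in>set s. x \<le> r"
    using s r by (simp_all add: cycle_words_def length_append_descending)
  have head: "?c ! t = s ! t" "s ! t \<in> {1..r}" if "t < r" for t
    using that len(1) nth_append_descending_head[of t s n] cycle_words_nth_mem[OF s, of t] by simp_all
  assume "occurs_1342_cyclically ?c"
  then obtain i j l m where pos: "i < n" "j < n" "l < n" "m < n" "cyclically_ordered i j l m"
    and val: "?c ! i < ?c ! m" "?c ! m < ?c ! j" "?c ! j < ?c ! l"
    unfolding occurs_1342_cyclically_def len by blast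
  note ijm = append_descending_1342_positions[OF len(1,3) r(2) pos val]
  show False
  proof (cases "l < r")
    case True
    then have "occurs_1342_cyclically s"
      using pos val head ijm len by (intro occurs_1342_cyclicallyI[of i s j l m]) auto
    then show False
      using no_1342 by simp
  next
    case False
    then have "m < i" "i < j"
      using pos(5) ijm by (auto simp: cyclically_ordered_def)
    have "m \<noteq> 0"
      using val(1) head[of i] head[of m] ijm s by (cases m) (auto simp: cycle_words_def)
    moreover have "m \<noteq> 1"
      using val(2) head[of j] head[of m] ijm second by auto
    ultimately have "1 < m"
      by simp
    have "s ! j \<noteq> r"
      using cycle_words_nth_eq_iff[OF s, of j 1] second \<open>1 < m\<close> \<open>m < i\<close> \<open>i < j\<close> ijm by auto
    then have "s ! j < r"
      using head[of j] ijm by auto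
    moreover have "cyclically_ordered i j 1 m"
      using \<open>1 < m\<close> \<open>m < i\<close> \<open>i < j\<close> by (simp add: cyclically_ordered_def)
    ultimately have "occurs_1342_cyclically s"
      using val head ijm len second r by (intro occurs_1342_cyclicallyI[of i s j 1 m]) auto
    then show False
      using no_1342 by simp
  qed
qed

lemma cycle_of_list_append_descending_head:
  assumes s: "s \<in> cycle_words r" and r: "r < n" and x: "x \<in> {1..r}"
  shows "cycle_of_list (append_descending s n) x = (if x = last s then n else cycle_of_list s x)"
proof -
  let ?c = "append_descending s n"
  have sd: "distinct s" "set s = {1..r}" "length s = r"
    using s by (auto simp: cycle_words_def)
  have "?c \<in> cycle_words n"
    using append_descending_mem_cycle_words[OF s] x r by simp
  then have step: "cycle_of_list ?c (?c ! t) = ?c ! (Suc t mod n)" if "t < n" for t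
    using cycle_of_list_nth[of ?c t] that by (simp add: cycle_words_def)
  obtain t where t: "t < r" "x = s ! t"
    using sd x by (metis in_set_conv_nth)
  have image: "cycle_of_list ?c x = ?c ! Suc t"
    using step[of t] t r sd nth_append_descending_head[of t s n] by simp
  have last: "last s = s ! (r - 1)"
    using cycle_words_last[OF s] x by simp
  show ?thesis
  proof (cases "Suc t = r")
    case True
    then have "x = last s"
      using t last by (metis diff_Suc_1)
    then show ?thesis
      using image True sd r nth_append_descending_tail[of s r n] by simp
  next
    case False
    then have "x \<noteq> last s"
      using t last sd nth_eq_iff_index_eq[of s t "r - 1"] by auto
    moreover have "cycle_of_list s x = s ! Suc t"
      using cycle_of_list_nth[OF sd(1), of t] t sd False by simp
    ultimately show ?thesis
      using image t sd False nth_append_descending_head[of "Suc t" s n] by simp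
  qed
qed

lemma cycle_of_list_append_descending_tail:
  assumes s: "s \<in> cycle_words r" and r: "1 \<le> r" "r < n" and x: "x \<in> {Suc r..n}"
  shows "cycle_of_list (append_descending s n) x = (if x = Suc r then 1 else x - 1)"
proof -
  let ?c = "append_descending s n"
  have sd: "length s = r" "s ! 0 = 1"
    using s by (auto simp: cycle_words_def)
  have "?c \<in> cycle_words n"
    using append_descending_mem_cycle_words[OF s] r by simp
  then have step: "cycle_of_list ?c (?c ! t) = ?c ! (Suc t mod n)" if "t < n" for t
    using cycle_of_list_nth[of ?c t] that by (simp add: cycle_words_def)
  define t where "t = n + r - x"
  have t: "r \<le> t" "t < n" "?c ! t = x"
    using x sd nth_append_descending_tail[of s t n] by (auto simp: t_def)
  then show ?thesis
    using step[of t] x sd r nth_append_descending_tail[of s "Suc t" n]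
      nth_append_descending_head[of 0 s n] by (auto simp: t_def)
qed

lemma one_line_append_descending:
  assumes s: "s \<in> cycle_words r" and r: "1 \<le> r" "r < n"
  shows "one_line n (cycle_of_list (append_descending s n)) =
    (one_line r (cycle_of_list s))[last s - 1 := n] @ 1 # [Suc r..<n]"
proof (rule nth_equalityI)
  have last: "last s \<in> {1..r}"
    using cycle_words_last[OF s] r by simp
  show "length (one_line n (cycle_of_list (append_descending s n))) =
      length ((one_line r (cycle_of_list s))[last s - 1 := n] @ 1 # [Suc r..<n])"
    using r by simp
  fix i assume "i < length (one_line n (cycle_of_list (append_descending s n)))"
  then have i: "i < n"
    by simp
  consider "i < r" | "i = r" | "r < i"
    by linarith
  then show "one_line n (cycle_of_list (append_descending s n)) ! i =
      ((one_line r (cycle_of_list s))[last s - 1 := n] @ 1 # [Suc r..<n]) ! i"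
  proof cases
    case 1
    then show ?thesis
      using cycle_of_list_append_descending_head[OF s r(2), of "Suc i"] i last
      by (auto simp: one_line_nth nth_append nth_list_update)
  next
    case 2
    then show ?thesis
      using cycle_of_list_append_descending_tail[OF s r, of "Suc i"] i
      by (simp add: one_line_nth nth_append)
  next
    case 3
    then show ?thesis
      using cycle_of_list_append_descending_tail[OF s r, of "Suc i"] i
      by (simp add: one_line_nth nth_append nth_Cons')
  qed
qed

text \<open>Otherwise the 2, its predecessor, the last letter and the second letter \<open>r\<close>
  would form a cyclic 1342.\<close>

lemma last_less_letter_before_two:
  assumes s: "s \<in> cycle_words r" and second: "s ! 1 = r" and r: "3 \<le> r"
    and no_1342: "\<not> occurs_1342_cyclically s" and j: "Suc j < r" "s ! Suc j = 2"
  shows "last s < s ! j"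
proof (rule ccontr)
  assume not_less: "\<not> last s < s ! j"
  have len: "length s = r" and last: "last s = s ! (r - 1)"
    using s cycle_words_last[OF s] r by (simp_all add: cycle_words_def)
  have "j \<noteq> 0"
    using j second r by (cases j) auto
  have "s ! j \<noteq> 1" "s ! j \<noteq> 2" "1 \<le> s ! j"
    using cycle_words_nth_eq_one_iff[OF s, of j] cycle_words_nth_eq_iff[OF s, of j "Suc j"]
      cycle_words_nth_mem[OF s, of j] \<open>j \<noteq> 0\<close> j by simp_all
  then have big: "3 \<le> s ! j"
    by presburger
  have "j \<noteq> r - 1"
    using j(1) by arith
  then have below_last: "s ! j < s ! (r - 1)"
    using not_less last cycle_words_nth_eq_iff[OF s, of "r - 1" j] j by simp
  have "Suc j \<noteq> r - 1"
  proof
    assume "Suc j = r - 1"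
    then show False
      using below_last big j(2) by simp
  qed
  then have j': "Suc j < r - 1"
    using j by simp
  have "s ! (r - 1) \<noteq> r"
    using cycle_words_nth_eq_iff[OF s, of "r - 1" 1] second r by simp
  then have last_below: "s ! (r - 1) < r"
    using cycle_words_nth_mem[OF s, of "r - 1"] r by simp
  have "j \<noteq> 1"
  proof
    assume "j = 1"
    then show False
      using below_last last_below second by simp
  qed
  then have "cyclically_ordered (Suc j) (r - 1) 1 j"
    using \<open>j \<noteq> 0\<close> j' by (simp add: cyclically_ordered_def)
  then have "occurs_1342_cyclically s"
    using j big below_last last_below second len j'
    by (intro occurs_1342_cyclicallyI[of "Suc j" s "r - 1" 1 j]) simp_all
  then show False
    using no_1342 by simp
qed

lemma one_line_positions_of_one_and_two:
  assumes s: "s \<in> cycle_words r" and second: "s ! 1 = r" and r: "3 \<le> r"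
    and no_1342: "\<not> occurs_1342_cyclically s"
  obtains q where "last s - 1 < q" "q < r"
    "one_line r (cycle_of_list s) ! (last s - 1) = 1" "one_line r (cycle_of_list s) ! q = 2"
proof -
  have sd: "distinct s" "set s = {1..r}" "length s = r" "s ! 0 = 1"
    using s by (auto simp: cycle_words_def)
  have last: "last s = s ! (r - 1)" "last s \<in> {1..r}"
    using cycle_words_last[OF s] r by simp_all
  have one: "one_line r (cycle_of_list s) ! (last s - 1) = 1"
    using cycle_of_list_nth[OF sd(1), of "r - 1"] one_line_nth_pred[OF last(2)] last sd r by simp
  have "2 \<in> set s"
    using sd r by simp
  then obtain t where t: "t < r" "s ! t = 2"
    using sd by (metis in_set_conv_nth)
  then obtain j where j: "t = Suc j"
    using sd by (cases t) auto
  have mem: "s ! j \<in> {1..r}"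
    using cycle_words_nth_mem[OF s, of j] t j by simp
  have two: "one_line r (cycle_of_list s) ! (s ! j - 1) = 2"
    using cycle_of_list_nth[OF sd(1), of j] one_line_nth_pred[OF mem] t j sd by simp
  have "last s < s ! j"
    using last_less_letter_before_two[OF s second r no_1342] t j by simp
  then show thesis
    by (intro that[of "s ! j - 1"]) (use one two last(2) mem in simp_all)
qed

lemma one_line_cycle_word:
  assumes "s \<in> cycle_words r"
  shows "distinct (one_line r (cycle_of_list s))" "set (one_line r (cycle_of_list s)) = {1..r}"
  using distinct_one_line set_one_line cycle_permutes[of s] assms by (simp_all add: cycle_words_def)

lemma has_decreasing_subseq_one_line_update_last:
  assumes s: "s \<in> cycle_words r" and second: "s ! 1 = r" and r: "3 \<le> r" "r < n"
    and no_1342: "\<not> occurs_1342_cyclically s"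
  shows "has_decreasing_subseq ((one_line r (cycle_of_list s))[last s - 1 := n]) k
    \<longleftrightarrow> has_decreasing_subseq (one_line r (cycle_of_list s)) k"
proof -
  let ?X = "one_line r (cycle_of_list s)" and ?p = "last s - 1"
  obtain q where q: "?p < q" "q < r" "?X ! ?p = 1" "?X ! q = 2"
    using one_line_positions_of_one_and_two[OF s second r(1) no_1342] by blast
  note X = one_line_cycle_word[OF s]
  have first: "?X ! 0 = r"
    using one_line_nth[of 0 r] cycle_of_list_one[OF s] second r by simp
  have "?p \<noteq> 0"
  proof
    assume "?p = 0"
    then show False
      using first q(3) r by simp
  qed
  then have p: "0 < ?p" "?p < length ?X"
    using q by simp_all
  have bound: "\<forall>i<length ?X. ?X ! i \<le> ?X ! 0"
  proof (intro allI impI)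
    fix i assume "i < length ?X"
    then have "?X ! i \<in> {1..r}"
      using X by (metis nth_mem)
    then show "?X ! i \<le> ?X ! 0"
      using first by simp
  qed
  have "\<forall>x\<in>set ?X. x < n" "\<forall>x\<in>set ?X. 1 \<le> x" "q < length ?X"
    using X q r by auto
  then show ?thesis
    using has_decreasing_subseq_list_update_greater[OF X(1) bound p] q
      has_decreasing_subseq_list_update_one[OF X(1), where v = n] by blast
qed

lemma has_decreasing_subseq_one_line_append_descending:
  assumes s: "s \<in> cycle_words r" and second: "s ! 1 = r" and r: "3 \<le> r" "r < n"
    and no_1342: "\<not> occurs_1342_cyclically s"
  shows "has_decreasing_subseq (one_line n (cycle_of_list (append_descending s n))) (Suc k)
    \<longleftrightarrow> has_decreasing_subseq (one_line r (cycle_of_list s)) k"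
proof -
  let ?X = "one_line r (cycle_of_list s)" and ?p = "last s - 1"
  obtain q where q: "?p < q" "q < r" "?X ! ?p = 1"
    using one_line_positions_of_one_and_two[OF s second r(1) no_1342] by blast
  note X = one_line_cycle_word[OF s]
  have above_one: "\<forall>x\<in>set (?X[?p := n]). 1 < x"
  proof
    fix x assume "x \<in> set (?X[?p := n])"
    then obtain i where i: "i < r" "x = ?X[?p := n] ! i"
      by (auto simp: in_set_conv_nth)
    show "1 < x"
    proof (cases "i = ?p")
      case False
      then have "?X ! i \<noteq> 1"
        using nth_eq_iff_index_eq[OF X(1), of i ?p] i q by auto
      moreover have "?X ! i \<in> {1..r}"
        using X i by (metis length_one_line nth_mem)
      ultimately show ?thesis
        using i False by simp
    qed (use i q r in simp)
  qed
  have "1 \<le> r"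
    using r by simp
  have "has_decreasing_subseq (one_line n (cycle_of_list (append_descending s n))) (Suc k)
      \<longleftrightarrow> has_decreasing_subseq (?X[?p := n]) k"
    unfolding one_line_append_descending[OF s \<open>1 \<le> r\<close> r(2)]
    by (rule has_decreasing_subseq_append_increasing) (use above_one r in simp_all)
  also have "\<dots> \<longleftrightarrow> has_decreasing_subseq ?X k"
    by (rule has_decreasing_subseq_one_line_update_last[OF s second r no_1342])
  finally show ?thesis .
qed

lemma append_descending_mem_good_words_iff:
  assumes s: "s \<in> cycle_words r" and second: "s ! 1 = r" and r: "3 \<le> r" "r < n"
  shows "append_descending s n \<in> good_words n (Suc k) \<longleftrightarrow> s \<in> good_words r k"
proof (cases "occurs_1342_cyclically s")
  case True
  then have "occurs_1342_cyclically (append_descending s n)"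
    unfolding append_descending_def by (rule occurs_1342_cyclically_append)
  then show ?thesis
    using True by (simp add: good_words_def)
next
  case False
  moreover have "\<not> occurs_1342_cyclically (append_descending s n)"
    using append_descending_no_1342[OF s second _ r(2) False] r by simp
  moreover have "append_descending s n \<in> cycle_words n"
    using append_descending_mem_cycle_words[OF s] r by simp
  ultimately show ?thesis
    using has_decreasing_subseq_one_line_append_descending[OF s second r False] s
    by (simp add: good_words_def)
qed

lemma good_words_second_letter_eq_image:
  assumes r: "3 \<le> r" "r < n"
  shows "{c \<in> good_words n (Suc k). c ! 1 = r}
    = (\<lambda>s. append_descending s n) ` {s \<in> good_words r k. s ! 1 = r}"
proof
  show "{c \<in> good_words n (Suc k). c ! 1 = r}
      \<subseteq> (\<lambda>s. append_descending s n) ` {s \<in> good_words r k. s ! 1 = r}"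
  proof
    fix c assume c: "c \<in> {c \<in> good_words n (Suc k). c ! 1 = r}"
    then have word: "c \<in> cycle_words n" and second: "c ! 1 = r"
      and no_1342: "\<not> occurs_1342_cyclically c"
      by (auto simp: good_words_def)
    note decomposition = cycle_word_eq_append_descending[OF word second r no_1342]
    have "take r c ! 1 = r"
      using second r by simp
    then have "take r c \<in> good_words r k"
      using append_descending_mem_good_words_iff[OF decomposition(1) _ r] decomposition(2) c by simp
    then show "c \<in> (\<lambda>s. append_descending s n) ` {s \<in> good_words r k. s ! 1 = r}"
      using decomposition(2) \<open>take r c ! 1 = r\<close> by blast
  qed
  show "(\<lambda>s. append_descending s n) ` {s \<in> good_words r k. s ! 1 = r}
      \<subseteq> {c \<in> good_words n (Suc k). c ! 1 = r}"
  proof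
    fix c assume "c \<in> (\<lambda>s. append_descending s n) ` {s \<in> good_words r k. s ! 1 = r}"
    then obtain s where s: "s \<in> good_words r k" "s ! 1 = r" and c: "c = append_descending s n"
      by blast
    then have word: "s \<in> cycle_words r"
      by (simp add: good_words_def)
    then have "c ! 1 = r"
      using nth_append_descending_head[of 1 s n] s(2) c r by (simp add: cycle_words_def)
    then show "c \<in> {c \<in> good_words n (Suc k). c ! 1 = r}"
      using append_descending_mem_good_words_iff[OF word s(2) r] s(1) c by simp
  qed
qed

lemma card_good_words_second_letter:
  assumes "3 \<le> r" "r < n"
  shows "card {c \<in> good_words n (Suc k). c ! 1 = r} = card {s \<in> good_words r k. s ! 1 = r}"
proof -
  have "inj_on (\<lambda>s. append_descending s n) {s \<in> good_words r k. s ! 1 = r}"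
  proof (rule inj_onI)
    fix s s' assume "s \<in> {s \<in> good_words r k. s ! 1 = r}" "s' \<in> {s \<in> good_words r k. s ! 1 = r}"
      and eq: "append_descending s n = append_descending s' n"
    then have "length s = r" "length s' = r"
      by (auto simp: good_words_def cycle_words_def)
    then show "s = s'"
      using take_append_descending[of s n] take_append_descending[of s' n] eq by metis
  qed
  then show ?thesis
    using good_words_second_letter_eq_image[OF assms] by (simp add: card_image)
qed

section \<open>The recurrence\<close>

theorem lemma3p6:
  fixes n k :: nat
  assumes "n \<ge> 5" and "k \<ge> 4"
  shows "a_circ_1342 n k = a_circ_1342 (n - 1) k + b_circ_1342 n k
           + (\<Sum>r = 3..n - 1. b_circ_1342 r (k - 1))"
proof -
  let ?C = "\<lambda>v. card {c \<in> good_words n k. c ! 1 = v}"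
  have "{2..n} = insert 2 (insert n {3..n - 1})"
    using assms by auto
  then have "a_circ_1342 n k = ?C 2 + (?C n + (\<Sum>r = 3..n - 1. ?C r))"
    using a_circ_1342_eq_card[of n k] card_good_words_eq_sum_second_letter[of n k] assms by simp
  moreover have "?C 2 = a_circ_1342 (n - 1) k"
    using card_good_words_second_two[of "n - 1" k] a_circ_1342_eq_card[of "n - 1" k] assms
    by (simp add: Suc_diff_1)
  moreover have "?C n = b_circ_1342 n k"
    using b_circ_1342_eq_card[of n k] assms by simp
  moreover have "?C r = b_circ_1342 r (k - 1)" if "r \<in> {3..n - 1}" for r
  proof -
    have "3 \<le> r" "r < n" "Suc (k - 1) = k"
      using that assms by auto
    then show ?thesis
      using card_good_words_second_letter[of r n "k - 1"] b_circ_1342_eq_card[of r "k - 1"] by simp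
  qed
  ultimately show ?thesis
    by simp
qed

end
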